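(* Any PUT operation $O$ by client $c$ writing key $k$ of partition $p$ at time $t$ with dependency timestamp $dt = dt_r$ satisfies per-key write-follows-reads consistency: for every server $s$ and every time $t'$ such that $CommittedWrites(s,k,t')$ includes $O$, no client accessing $s$ (at or after $t'$) reads a value of $k$ written by a write $w\neq O$ with $w\in ClientReads(c,k,t)$.
   Context: System model. Data is replicated in $D$ datacenters and split into $P$ partitions. In each datacenter $d$, each partition is replicated by a Raft group with a leader $L_d$; Raft guarantees that all members of a group commit the same totally ordered sequence of log entries, each with a log index, in increasing index order. Every version $v$ of a key carries a value, an originating datacenter $v.dc\_id$, the log index $idx(v)$ it received in the Raft log of its originating datacenter, and a hybrid logical clock (HLC) timestamp $v.t=\langle l,c\rangle$; HLC timestamps are compared lexicographically. Writes committed in the group of datacenter $d$ that originated at $d$ are forwarded, in commit order, over FIFO channels to the leaders of the same partition in every other datacenter, which append them (carrying their original index $idx(v)$) to their own Raft logs. Each server $s$ keeps a vector $sv$ of length $D$, initially zero; when $s$ commits a version $v$ it sets $sv[v.dc\_id]:=idx(v)$ and adds $v$ to the version chain of its key. Client protocol. Each client $c$ keeps $D\times P$ matrices $hrm$ (highest read) and $hwm$ (highest write), initially zero, and HLC timestamps $dt_r,dt_w$, initially zero. GET of key $k$ in partition $p$: the client sends vectors $hrv,hwv$ of length $D$ (each either the zero vector or $hrm[:,p]$, resp. $hwm[:,p]$); the server blocks while there is $i$ with $sv[i]<hrv[i]$ or $sv[i]<hwv[i]$; it then returns the version $v$ of $k$ in its version chain with the largest timestamp, together with $v.dc\_id$,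 $sv[v.dc\_id]$ and $v.t$; the client sets $hrm[v.dc\_id,p]:=\max(hrm[v.dc\_id,p],sv[v.dc\_id])$ and $dt_r:=\max(dt_r,v.t)$. PUT of key $k$ in partition $p$ at leader $L_d$: the client sends a dependency timestamp $dt$ (one of $0$, $dt_r$, $dt_w$, $\max(dt_r,dt_w)$); the leader updates its HLC $\langle l,c\rangle$ with $dt$ by the rule: $l':=l$; $l:=\max(l',pt,dt.l)$ where $pt$ is its physical clock; then $c:=\max(c,dt.c)+1$ if $l=l'=dt.l$, else $c:=c+1$ if $l=l'$, else $c:=dt.c+1$ if $l=dt.l$, else $c:=0$; it timestamps the new version with the updated HLC value $t$ and $dc\_id=d$, appends it to the Raft log, and after commit replies with $d$, $sv[d]$ and $t$; the client sets $hwm[d,p]:=\max(hwm[d,p],sv[d])$ and $dt_w:=\max(dt_w,t)$. Definitions. $CommittedWrites(s,k,t)$ is the ordered sequence of all writes of key $k$ committed at server $s$ by time $t$; $ClientWrites(c,k,t)$ is the ordered sequence of all writes of $k$ done by client $c$ by time $t$; $ClientReads(c,k,t)$ is the set of writes whose value of $k$ has been read by client $c$ by time $t$. *)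

theory Defs
  imports Main "HOL-Library.Product_Lexorder"
begin

text \<open>HLC timestamps are pairs (l, c) of naturals, ordered lexicographically
  (linear order provided by HOL-Library.Product_Lexorder).\<close>
type_synonym hlc = "nat \<times> nat"

text \<open>Servers are identified by (datacenter, partition, replica); replica 0 is the
  leader of the Raft group of that partition in that datacenter.\<close>
type_synonym server = "nat \<times> nat \<times> nat"

record ('k, 'v) version =
  vkey :: 'k
  vval :: 'v
  vdc  :: nat
  vidx :: nat
  vts  :: hlc

record ('k, 'v) cstate =
  hrm :: "nat \<Rightarrow> nat \<Rightarrow> nat"
  hwm :: "nat \<Rightarrow> nat \<Rightarrow> nat"
  dtr :: hlc
  dtw :: hlc
  pending :: "('k, 'v) version option"   (* outstanding PUT awaiting its reply *)

record ('k, 'v, 'c) state =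
  logs      :: "nat \<Rightarrow> nat \<Rightarrow> ('k, 'v) version list"   (* Raft log of group (d,p) *)
  committed :: "server \<Rightarrow> ('k, 'v) version list"
  sv        :: "server \<Rightarrow> nat \<Rightarrow> nat"
  chain     :: "server \<Rightarrow> 'k \<Rightarrow> ('k, 'v) version set"
  lhlc      :: "nat \<Rightarrow> nat \<Rightarrow> hlc"                     (* HLC of leader of group (d,p) *)
  chan      :: "nat \<Rightarrow> nat \<Rightarrow> nat \<Rightarrow> ('k, 'v) version list"  (* FIFO channel d -> d' for partition p *)
  clients   :: "'c \<Rightarrow> ('k, 'v) cstate"

datatype ('k, 'v, 'c) label =
    LGet 'c server 'k bool bool "('k, 'v) version option"
      (* client, server, key, send hrm column?, send hwm column?, returned version *)
  | LPut 'c nat 'k 'v hlc nat "('k, 'v) version"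
      (* client, datacenter of leader, key, value, dependency timestamp, physical clock, new version *)
  | LPutReply 'c "('k, 'v) version"
  | LCommit server "('k, 'v) version"
  | LForward nat nat nat "('k, 'v) version"
  | LIdle

definition hlc_tick :: "hlc \<Rightarrow> nat \<Rightarrow> hlc \<Rightarrow> hlc" where
  "hlc_tick cur pt dt =
     (let l' = fst cur; c = snd cur;
          l = max l' (max pt (fst dt));
          c2 = (if l = l' \<and> l' = fst dt then max c (snd dt) + 1
                else if l = l' then c + 1
                else if l = fst dt then snd dt + 1
                else 0)
      in (l, c2))"

definition init_state :: "('k, 'v, 'c) state" where
  "init_state = \<lparr> logs = (\<lambda>_ _. []), committed = (\<lambda>_. []), sv = (\<lambda>_ _. 0),
     chain = (\<lambda>_ _. {}), lhlc = (\<lambda>_ _. (0, 0)), chan = (\<lambda>_ _ _. []),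
     clients = (\<lambda>_. \<lparr> hrm = (\<lambda>_ _. 0), hwm = (\<lambda>_ _. 0), dtr = (0, 0), dtw = (0, 0),
                       pending = None \<rparr>) \<rparr>"

text \<open>One step of the protocol. Parameters: number of datacenters D, number of
  partitions P, number of replicas per Raft group R, and the key-to-partition map.\<close>
inductive step :: "nat \<Rightarrow> nat \<Rightarrow> nat \<Rightarrow> ('k \<Rightarrow> nat) \<Rightarrow>
    ('k, 'v, 'c) state \<Rightarrow> ('k, 'v, 'c) label \<Rightarrow> ('k, 'v, 'c) state \<Rightarrow> bool"
  for D P R :: nat and part :: "'k \<Rightarrow> nat" where
  get: "\<lbrakk> cs = clients S c; pending cs = None;
          s = (d, part k, r); d < D; r < R; part k < P;
          hrv = (if rflag then (\<lambda>i. hrm cs i (part k)) else (\<lambda>_. 0));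
          hwv = (if wflag then (\<lambda>i. hwm cs i (part k)) else (\<lambda>_. 0));
          \<forall>i<D. hrv i \<le> sv S s i \<and> hwv i \<le> sv S s i;
          (chain S s k = {} \<and> res = None \<and> S' = S) \<or>
          (\<exists>v. res = Some v \<and> v \<in> chain S s k \<and> (\<forall>u\<in>chain S s k. vts u \<le> vts v) \<and>
              S' = S\<lparr> clients := (clients S)(c := cs\<lparr>
                     hrm := (hrm cs)(vdc v := (hrm cs (vdc v))(part k :=
                              max (hrm cs (vdc v) (part k)) (sv S s (vdc v)))),
                     dtr := max (dtr cs) (vts v) \<rparr>) \<rparr>) \<rbrakk>
        \<Longrightarrow> step D P R part S (LGet c s k rflag wflag res) S'"
| put: "\<lbrakk> cs = clients S c; pending cs = None; d < D; p = part k; p < P;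
          dt \<in> {(0, 0), dtr cs, dtw cs, max (dtr cs) (dtw cs)};
          t = hlc_tick (lhlc S d p) pt dt;
          v = \<lparr> vkey = k, vval = x, vdc = d, vidx = Suc (length (logs S d p)), vts = t \<rparr>;
          S' = S\<lparr> logs := (logs S)(d := (logs S d)(p := logs S d p @ [v])),
                  lhlc := (lhlc S)(d := (lhlc S d)(p := t)),
                  clients := (clients S)(c := cs\<lparr> pending := Some v \<rparr>) \<rparr> \<rbrakk>
        \<Longrightarrow> step D P R part S (LPut c d k x dt pt v) S'"
| put_reply: "\<lbrakk> cs = clients S c; pending cs = Some v;
          L = (vdc v, part (vkey v), 0); v \<in> set (committed S L);
          S' = S\<lparr> clients := (clients S)(c := cs\<lparr>
                     hwm := (hwm cs)(vdc v := (hwm cs (vdc v))(part (vkey v) :=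
                              max (hwm cs (vdc v) (part (vkey v))) (sv S L (vdc v)))),
                     dtw := max (dtw cs) (vts v),
                     pending := None \<rparr>) \<rparr> \<rbrakk>
        \<Longrightarrow> step D P R part S (LPutReply c v) S'"
| commit: "\<lbrakk> s = (d, p, r); d < D; p < P; r < R;
          length (committed S s) < length (logs S d p);
          v = logs S d p ! length (committed S s);
          S' = S\<lparr> committed := (committed S)(s := committed S s @ [v]),
                  sv := (sv S)(s := (sv S s)(vdc v := vidx v)),
                  chain := (chain S)(s := (chain S s)(vkey v := insert v (chain S s (vkey v)))),
                  chan := (if r = 0 \<and> vdc v = d
                           then (\<lambda>d1 d2 q. if d1 = d \<and> q = p \<and> d2 < D \<and> d2 \<noteq> d
                                            then chan S d1 d2 q @ [v] else chan S d1 d2 q)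
                           else chan S) \<rparr> \<rbrakk>
        \<Longrightarrow> step D P R part S (LCommit s v) S'"
| forward: "\<lbrakk> d < D; d' < D; p < P; chan S d d' p = v # rest;
          S' = S\<lparr> chan := (chan S)(d := (chan S d)(d' := (chan S d d')(p := rest))),
                  logs := (logs S)(d' := (logs S d')(p := logs S d' p @ [v])) \<rparr> \<rbrakk>
        \<Longrightarrow> step D P R part S (LForward d d' p v) S'"
| idle: "step D P R part S LIdle S"

definition exec :: "nat \<Rightarrow> nat \<Rightarrow> nat \<Rightarrow> ('k \<Rightarrow> nat) \<Rightarrow>
    (nat \<Rightarrow> ('k, 'v, 'c) state) \<Rightarrow> (nat \<Rightarrow> ('k, 'v, 'c) label) \<Rightarrow> bool" where
  "exec D P R part sigma lab \<longleftrightarrow>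
     sigma 0 = init_state \<and> (\<forall>n. step D P R part (sigma n) (lab n) (sigma (Suc n)))"

definition CommittedWrites :: "(nat \<Rightarrow> ('k, 'v, 'c) state) \<Rightarrow> server \<Rightarrow> 'k \<Rightarrow> nat
    \<Rightarrow> ('k, 'v) version list" where
  "CommittedWrites sigma s k t = filter (\<lambda>v. vkey v = k) (committed (sigma t) s)"

definition ClientWrites :: "(nat \<Rightarrow> ('k, 'v, 'c) label) \<Rightarrow> 'c \<Rightarrow> 'k \<Rightarrow> nat
    \<Rightarrow> ('k, 'v) version list" where
  "ClientWrites lab c k t =
     concat (map (\<lambda>n. case lab n of LPut c' d k' x dt pt v \<Rightarrow>
                        if c' = c \<and> k' = k then [v] else [] | _ \<Rightarrow> []) [0..<t])"

definition ClientReads :: "(nat \<Rightarrow> ('k, 'v, 'c) label) \<Rightarrow> 'c \<Rightarrow> 'k \<Rightarrow> nat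
    \<Rightarrow> ('k, 'v) version set" where
  "ClientReads lab c k t = {w. \<exists>n<t. \<exists>s rflag wflag. lab n = LGet c s k rflag wflag (Some w)}"

end

theory Submission
  imports Defs
begin

text \<open>The dependency timestamp of a PUT with dt = dt_r dominates the timestamp of every version
  the client has read so far, and the HLC update makes the new version strictly newer than dt.
  A GET at a server where the PUT is committed returns the newest version in the chain of the
  key, which contains the PUT; so it returns something at least as new as the PUT, hence
  nothing the client had read before issuing it.\<close>

lemma less_hlc_tick: "dt < hlc_tick cur pt dt"
  by (cases dt; cases cur) (auto simp: hlc_tick_def Let_def less_prod_def)

lemma exec_step:
  assumes "exec D P R part sigma lab"
  shows "step D P R part (sigma n) (lab n) (sigma (Suc n))"
  using assms unfolding exec_def by blast

lemma exec_mono: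
  fixes f :: "('k, 'v, 'c) state \<Rightarrow> 'a :: preorder"
  assumes "exec D P R part sigma lab"
    and "\<And>S l S'. step D P R part S l S' \<Longrightarrow> f S \<le> f S'"
    and "m \<le> n"
  shows "f (sigma m) \<le> f (sigma n)"
  using assms(3)
proof (induction n rule: dec_induct)
  case (step n)
  then show ?case using assms(2)[OF exec_step[OF assms(1)]] order_trans by blast
qed simp

lemma exec_invariant:
  assumes "exec D P R part sigma lab"
    and "I init_state"
    and "\<And>S l S'. step D P R part S l S' \<Longrightarrow> I S \<Longrightarrow> I S'"
  shows "I (sigma n)"
proof (induction n)
  case 0
  then show ?case using assms(1,2) by (simp add: exec_def)
next
  case (Suc n)
  then show ?case using assms(3)[OF exec_step[OF assms(1)]] by blast
qed

lemma step_dtr_mono: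
  "step D P R part S l S' \<Longrightarrow> dtr (clients S c) \<le> dtr (clients S' c)"
  by (cases rule: step.cases) auto

lemma step_committed_mono:
  "step D P R part S l S' \<Longrightarrow> set (committed S s) \<subseteq> set (committed S' s)"
  by (cases rule: step.cases) auto

definition committed_in_chain :: "('k, 'v, 'c) state \<Rightarrow> bool" where
  "committed_in_chain S \<longleftrightarrow> (\<forall>s v. v \<in> set (committed S s) \<longrightarrow> v \<in> chain S s (vkey v))"

lemma committed_in_chain_init: "committed_in_chain init_state"
  by (simp add: committed_in_chain_def init_state_def)

lemma step_committed_in_chain:
  assumes "step D P R part S l S'" and "committed_in_chain S"
  shows "committed_in_chain S'"
  using assms(1)
proof (cases rule: step.cases)
  case (commit s d p r v)
  show ?thesis unfolding committed_in_chain_def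
  proof (intro allI impI)
    fix s' u assume "u \<in> set (committed S' s')"
    then have "u \<in> set (committed S s') \<or> (s' = s \<and> u = v)"
      using commit by (auto split: if_splits)
    moreover have "u \<in> chain S s' (vkey u)" if "u \<in> set (committed S s')"
      using assms(2) that unfolding committed_in_chain_def by blast
    ultimately show "u \<in> chain S' s' (vkey u)"
      using commit by (cases "vkey u = vkey v") auto
  qed
qed (use assms(2) in \<open>auto simp: committed_in_chain_def\<close>)

lemma exec_committed_in_chain:
  "exec D P R part sigma lab \<Longrightarrow> committed_in_chain (sigma n)"
  by (erule exec_invariant) (auto intro: committed_in_chain_init step_committed_in_chain)

lemma step_get_latest:
  assumes "step D P R part S (LGet c s k rflag wflag (Some w)) S'"
  shows "\<forall>u\<in>chain S s k. vts u \<le> vts w"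
  using assms by (cases rule: step.cases) auto

lemma step_get_dtr:
  assumes "step D P R part S (LGet c s k rflag wflag (Some w)) S'"
  shows "vts w \<le> dtr (clients S' c)"
  using assms by (cases rule: step.cases) auto

lemma step_put_newer_than_dep:
  assumes "step D P R part S (LPut c d k x dt pt v) S'"
  shows "dt < vts v"
  using assms by (cases rule: step.cases) (auto intro: less_hlc_tick)

lemma put_newer_than_client_reads:
  assumes "exec D P R part sigma lab"
    and "lab t = LPut c d k x dt pt v"
    and "dt = dtr (clients (sigma t) c)"
    and "w \<in> ClientReads lab c k t"
  shows "vts w < vts v"
proof -
  obtain n s rflag wflag where n: "n < t" "lab n = LGet c s k rflag wflag (Some w)"
    using assms(4) unfolding ClientReads_def by blast
  have "vts w \<le> dtr (clients (sigma (Suc n)) c)"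
    using step_get_dtr exec_step[OF assms(1), of n] n(2) by metis
  also have "\<dots> \<le> dtr (clients (sigma t) c)"
    using n(1) by (intro exec_mono[where f = "\<lambda>S. dtr (clients S c)", OF assms(1)] step_dtr_mono)
      simp_all
  also have "\<dots> = dt"
    using assms(3) by simp
  also have "\<dots> < vts v"
    using step_put_newer_than_dep exec_step[OF assms(1), of t] assms(2) by metis
  finally show ?thesis .
qed

lemma get_not_older_than_committed:
  assumes "exec D P R part sigma lab"
    and "v \<in> set (CommittedWrites sigma s k t')"
    and "t' \<le> t''"
    and "lab t'' = LGet c s k rflag wflag (Some w)"
  shows "vts v \<le> vts w"
proof -
  have "v \<in> set (committed (sigma t') s)" and "vkey v = k"
    using assms(2) unfolding CommittedWrites_def by auto
  moreover have "set (committed (sigma t') s) \<subseteq> set (committed (sigma t'') s)"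
    by (rule exec_mono[where f = "\<lambda>S. set (committed S s)", OF assms(1) _ assms(3)])
      (rule step_committed_mono)
  ultimately have "v \<in> set (committed (sigma t'') s)"
    by blast
  moreover note exec_committed_in_chain[OF assms(1), of t'']
  ultimately have "v \<in> chain (sigma t'') s k"
    using \<open>vkey v = k\<close> unfolding committed_in_chain_def by blast
  then show ?thesis
    using step_get_latest exec_step[OF assms(1), of t''] assms(4) by metis
qed

theorem mainTheorem5:
  fixes D P R :: nat and part :: "'k \<Rightarrow> nat"
    and sigma :: "nat \<Rightarrow> ('k, 'v, 'c) state" and lab :: "nat \<Rightarrow> ('k, 'v, 'c) label"
  assumes "exec D P R part sigma lab"
    and "lab t = LPut c d k x dt pt opv"
    and "dt = dtr (clients (sigma t) c)"
  shows "\<forall>s t'. opv \<in> set (CommittedWrites sigma s k t') \<longrightarrow>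
           (\<forall>t''\<ge>t'. \<forall>c' rflag wflag w. lab t'' = LGet c' s k rflag wflag (Some w) \<longrightarrow>
              \<not> (w \<noteq> opv \<and> w \<in> ClientReads lab c k t))"
proof (intro allI impI notI)
  fix s t' t'' c' rflag wflag w
  assume "opv \<in> set (CommittedWrites sigma s k t')" "t' \<le> t''"
    and "lab t'' = LGet c' s k rflag wflag (Some w)"
    and "w \<noteq> opv \<and> w \<in> ClientReads lab c k t"
  then have "vts opv \<le> vts w" and "vts w < vts opv"
    using get_not_older_than_committed[OF assms(1)] put_newer_than_client_reads[OF assms]
    by blast+
  then show False by simp
qed

end
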